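(* Let $y$ be the solution of the problem $\varepsilon^2 y''(x)=f(x,y)$ on $(0,1)$, $y(0)=y(1)=0$, with $f$ and the Shishkin mesh $\{x_i\}_{i=0}^N$ as described in the context, and let $F$ be the discrete operator defined in the context. Assume that $\varepsilon\leqslant C_0/N$ for some constant $C_0>0$. Then there is a constant $C>0$ independent of $N$ and $\varepsilon$ such that $$|(Fy)_{N/4}|\leqslant\frac{C}{N},$$ where $(Fy)_{N/4}$ is the component with index $N/4$ (corresponding to the mesh point $x_{N/4}=\lambda$) of $F$ applied to the vector $(y(x_0),\ldots,y(x_N))^T$.
   Context: Problem: $\varepsilon^2y''(x)=f(x,y)$ on $(0,1)$, $y(0)=y(1)=0$, where $\varepsilon>0$ is a small parameter, $f\in C^k([0,1]\times\mathbb{R})$ for some $k\geq 2$, and $f_y=\partial f/\partial y\geq m>0$ on $[0,1]\times\mathbb{R}$ for a constant $m$; this problem has a unique solution $y$. Shishkin mesh: $N$ is a positive integer divisible by 4, $\lambda=\min\{1/4,\,2\varepsilon\ln N/\sqrt{m}\}$, and it is assumed that $\lambda=2\varepsilon\ln N/\sqrt{m}$. The mesh $0=x_0<x_1<\cdots<x_N=1$ is equidistant on each of $[0,\lambda]$ (with $N/4$ subintervals), $[\lambda,1-\lambda]$ (with $N/2$ subintervals) and $[1-\lambda,1]$ (with $N/4$ subintervals); thus $x_{N/4}=\lambda$, $x_{3N/4}=1-\lambda$, subintervals in $[0,\lambda]\cup[1-\lambda,1]$ have length $4\lambda/N$ and those in $[\lambda,1-\lambda]$ have length $2(1-2\lambda)/N$.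 Scheme: $\gamma$ is a constant with $\gamma\geq f_y$, and $\beta=\sqrt{\gamma}/\varepsilon$. For $i=1,\ldots,N$ let $\ell_i=x_i-x_{i-1}$, $d_i=\beta/\tanh(\beta\ell_i)$, $a_i=\beta/\sinh(\beta\ell_i)$, $\Delta d_i=d_i-a_i$. For $v=(v_0,\ldots,v_N)^T\in\mathbb{R}^{N+1}$ define $Fv\in\mathbb{R}^{N+1}$ by $(Fv)_0=v_0$, $(Fv)_N=v_N$ and, for $i=1,\ldots,N-1$, $$(Fv)_i=\frac{\gamma}{\Delta d_i+\Delta d_{i+1}}\Big[\tfrac{a_i+d_i}{2}v_{i-1}-\big(\tfrac{a_i+d_i}{2}+\tfrac{a_{i+1}+d_{i+1}}{2}\big)v_i+\tfrac{a_{i+1}+d_{i+1}}{2}v_{i+1}-\tfrac{\Delta d_i}{\gamma}f\big(\tfrac{x_{i-1}+x_i}{2},\tfrac{v_{i-1}+v_i}{2}\big)-\tfrac{\Delta d_{i+1}}{\gamma}f\big(\tfrac{x_{i}+x_{i+1}}{2},\tfrac{v_{i}+v_{i+1}}{2}\big)\Big].$$ *)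

theory Defs
  imports "HOL-Analysis.Analysis"
begin

definition strip :: "(real \<times> real) set" where
  "strip = {0..1} \<times> UNIV"

definition C2_with_partials ::
  "(real \<times> real \<Rightarrow> real) \<Rightarrow> (real \<times> real \<Rightarrow> real) \<Rightarrow> (real \<times> real \<Rightarrow> real) \<Rightarrow>
   (real \<times> real \<Rightarrow> real) \<Rightarrow> (real \<times> real \<Rightarrow> real) \<Rightarrow> (real \<times> real \<Rightarrow> real) \<Rightarrow>
   (real \<times> real \<Rightarrow> real) \<Rightarrow> (real \<times> real) set \<Rightarrow> bool" where
  "C2_with_partials f fx fy fxx fxy fyx fyy S \<longleftrightarrow>
     (\<forall>z\<in>S. (f has_derivative (\<lambda>h. fx z * fst h + fy z * snd h)) (at z within S)) \<and>
     (\<forall>z\<in>S. (fx has_derivative (\<lambda>h. fxx z * fst h + fxy z * snd h)) (at z within S)) \<and>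
     (\<forall>z\<in>S. (fy has_derivative (\<lambda>h. fyx z * fst h + fyy z * snd h)) (at z within S)) \<and>
     continuous_on S fxx \<and> continuous_on S fxy \<and> continuous_on S fyx \<and> continuous_on S fyy"

definition bvp_solution :: "real \<Rightarrow> (real \<times> real \<Rightarrow> real) \<Rightarrow> (real \<Rightarrow> real) \<Rightarrow> bool" where
  "bvp_solution eps f y \<longleftrightarrow>
     continuous_on {0..1} y \<and> y 0 = 0 \<and> y 1 = 0 \<and>
     (\<exists>y' y''. \<forall>x\<in>{0<..<1}. (y has_real_derivative y' x) (at x) \<and>
                               (y' has_real_derivative y'' x) (at x) \<and>
                               eps\<^sup>2 * y'' x = f (x, y x))"

definition shishkin_lambda :: "real \<Rightarrow> real \<Rightarrow> nat \<Rightarrow> real" where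
  "shishkin_lambda eps m N = min (1/4) (2 * eps * ln (real N) / sqrt m)"

definition shishkin_node :: "real \<Rightarrow> real \<Rightarrow> nat \<Rightarrow> nat \<Rightarrow> real" where
  "shishkin_node eps m N i =
     (let lam = shishkin_lambda eps m N in
      if i \<le> N div 4 then real i * (4 * lam / real N)
      else if i \<le> 3 * N div 4 then lam + real (i - N div 4) * (2 * (1 - 2 * lam) / real N)
      else 1 - lam + real (i - 3 * N div 4) * (4 * lam / real N))"

definition scheme_F :: "real \<Rightarrow> real \<Rightarrow> (real \<times> real \<Rightarrow> real) \<Rightarrow> nat \<Rightarrow> (nat \<Rightarrow> real)
    \<Rightarrow> (nat \<Rightarrow> real) \<Rightarrow> nat \<Rightarrow> real" where
  "scheme_F gam eps f N x v i =
    (if i = 0 \<or> i = N then v i else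
     (let beta = sqrt gam / eps;
          l = (\<lambda>j. x j - x (j - 1));
          d = (\<lambda>j. beta / tanh (beta * l j));
          a = (\<lambda>j. beta / sinh (beta * l j));
          dd = (\<lambda>j. d j - a j)
      in gam / (dd i + dd (Suc i)) *
         ((a i + d i) / 2 * v (i - 1)
          - ((a i + d i) / 2 + (a (Suc i) + d (Suc i)) / 2) * v i
          + (a (Suc i) + d (Suc i)) / 2 * v (Suc i)
          - dd i / gam * f ((x (i - 1) + x i) / 2, (v (i - 1) + v i) / 2)
          - dd (Suc i) / gam * f ((x i + x (Suc i)) / 2, (v i + v (Suc i)) / 2))))"

end

theory Submission
  imports Defs
begin

(*
  The scheme is exact for constant sources. On a cell [p, q] the problem eps^2 u'' - gam u = c
  is solved by cell_solution, and (F v)_i is gam / (Delta d_i + Delta d_(i+1)) times the jump at x_i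
  of the derivatives of the two cell solutions with end values v, where on each cell c is
  f - gam y frozen at the midpoint and at the mean of the end values (frozen_source). Squeezing y
  between the cell solutions for c - sigma and c + sigma (maximum principle) therefore bounds
  |(F y)_i| by the largest deviation sigma of eps^2 y'' - gam y from the frozen source on the two
  cells around x_i.

  At x_(N/4) = lambda both cells have width O(1/N), so sigma = O(1/N) as soon as y varies by O(1/N)
  on them. This comes from a barrier argument for y (x + delta) - y x, which gives
    |y t - y s| <= L (t - s) / m + M (exp (- sqrt m s / eps) + exp (- sqrt m (1 - t) / eps)),
  together with exp (- sqrt m x_(N/4 - 1) / eps) <= 4 / N, which is what the choice of lambda buys.
*)

lemma C2_with_partials_bounded_on_axis:
  assumes "C2_with_partials f fx fy fxx fxy fyx fyy strip"
  obtains A where "\<And>t. t \<in> {0..1} \<Longrightarrow> \<bar>f (t, 0)\<bar> \<le> A"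
proof -
  have "continuous_on strip f"
    using assms unfolding C2_with_partials_def by (intro has_derivative_continuous_on) blast
  then have "continuous_on {0..1} (\<lambda>t. f (t, 0))"
    by (rule continuous_on_compose2) (auto intro!: continuous_intros simp: strip_def)
  then have "compact ((\<lambda>t. f (t, 0)) ` {0..1})"
    by (rule compact_continuous_image[OF _ compact_Icc])
  then obtain A where "\<forall>z \<in> (\<lambda>t. f (t, 0)) ` {0..1}. \<bar>z\<bar> \<le> A"
    using compact_imp_bounded bounded_real by blast
  then show thesis
    using that by blast
qed

lemma C2_with_partials_strongly_monotone:
  assumes f: "C2_with_partials f fx fy fxx fxy fyx fyy strip"
    and fy: "\<forall>z\<in>strip. m \<le> fy z"
    and x: "x \<in> {0..1}" and "u \<le> v"
  shows "m * (v - u) \<le> f (x, v) - f (x, u)"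
proof -
  have f': "(f has_derivative (\<lambda>h. fx z * fst h + fy z * snd h)) (at z within strip)" if "z \<in> strip" for z
    using f that unfolding C2_with_partials_def by blast
  have "((\<lambda>t. f (x, t)) has_real_derivative fy (x, t)) (at t)" for t
  proof -
    have "((\<lambda>t. f (x, t)) has_derivative (\<lambda>h. fx (x, t) * fst (0::real, h) + fy (x, t) * snd (0::real, h))) (at t)"
      by (rule has_derivative_in_compose2[OF f', of "\<lambda>t. (x, t)" UNIV t "\<lambda>h. (0, h)"])
        (use x in \<open>auto simp: strip_def intro!: derivative_eq_intros\<close>)
    then show ?thesis by (simp add: has_field_derivative_def mult_commute_abs)
  qed
  then have "f (x, u) - m * u \<le> f (x, v) - m * v"
    using fy x \<open>u \<le> v\<close>
    by (intro DERIV_nonneg_imp_nondecreasing[where f = "\<lambda>t. f (x, t) - m * t"])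
      (auto intro!: exI derivative_eq_intros simp: strip_def)
  then show ?thesis by (simp add: algebra_simps)
qed

lemma C2_with_partials_lipschitz_on_rectangle:
  assumes f: "C2_with_partials f fx fy fxx fxy fyx fyy strip"
  obtains L where "L > 0"
    and "\<And>s t u v. s \<in> {0..1} \<Longrightarrow> t \<in> {0..1} \<Longrightarrow> \<bar>u\<bar> \<le> M \<Longrightarrow> \<bar>v\<bar> \<le> M \<Longrightarrow>
           \<bar>f (s, u) - f (t, v)\<bar> \<le> L * (\<bar>s - t\<bar> + \<bar>u - v\<bar>)"
proof -
  let ?K = "{0..1::real} \<times> {-M..M::real}"
  have K: "?K \<subseteq> strip" by (auto simp: strip_def)
  have f': "(f has_derivative (\<lambda>h. fx z * fst h + fy z * snd h)) (at z within strip)" if "z \<in> strip" for z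
    using f that unfolding C2_with_partials_def by blast
  have "continuous_on strip fx" "continuous_on strip fy"
    using f unfolding C2_with_partials_def by (auto intro!: has_derivative_continuous_on)
  then have "continuous_on ?K (\<lambda>z. \<bar>fx z\<bar> + \<bar>fy z\<bar>)"
    using K by (intro continuous_intros) (auto elim: continuous_on_subset)
  then have "bounded ((\<lambda>z. \<bar>fx z\<bar> + \<bar>fy z\<bar>) ` ?K)"
    by (intro compact_imp_bounded compact_continuous_image compact_Times compact_Icc)
  then obtain B where B: "\<And>z. z \<in> ?K \<Longrightarrow> \<bar>fx z\<bar> + \<bar>fy z\<bar> \<le> B"
    unfolding bounded_real by fastforce
  have "onorm (\<lambda>h. fx z * fst h + fy z * snd h) \<le> max B 1" if "z \<in> ?K" for z
  proof (rule onorm_le)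
    fix h :: "real \<times> real"
    have "norm (fx z * fst h + fy z * snd h) \<le> \<bar>fx z\<bar> * norm h + \<bar>fy z\<bar> * norm h"
      using norm_fst_le[of "fst h" "snd h"] norm_snd_le[of "snd h" "fst h"]
      by (auto simp: abs_mult intro!: order.trans[OF abs_triangle_ineq] add_mono mult_left_mono)
    also have "\<dots> \<le> max B 1 * norm h"
      using B[OF that] by (simp add: distrib_right[symmetric] mult_right_mono)
    finally show "norm (fx z * fst h + fy z * snd h) \<le> max B 1 * norm h" .
  qed
  then have lip: "norm (f a - f b) \<le> max B 1 * norm (a - b)" if "a \<in> ?K" "b \<in> ?K" for a b
    using that f' K
    by (intro differentiable_bound[of ?K f "\<lambda>z h. fx z * fst h + fy z * snd h"])
      (auto intro: convex_Times has_derivative_subset[OF f'] simp: strip_def)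
  show thesis
  proof (rule that)
    fix s t u v :: real
    assume "s \<in> {0..1}" "t \<in> {0..1}" "\<bar>u\<bar> \<le> M" "\<bar>v\<bar> \<le> M"
    then have "\<bar>f (s, u) - f (t, v)\<bar> \<le> max B 1 * norm ((s, u) - (t, v))"
      using lip[of "(s, u)" "(t, v)"] by (auto simp: abs_le_iff)
    also have "\<dots> \<le> max B 1 * (\<bar>s - t\<bar> + \<bar>u - v\<bar>)"
      using norm_Pair_le[of "s - t" "u - v"] by (intro mult_left_mono) auto
    finally show "\<bar>f (s, u) - f (t, v)\<bar> \<le> max B 1 * (\<bar>s - t\<bar> + \<bar>u - v\<bar>)" .
  qed simp
qed

lemma max_principle:
  fixes w w' w'' :: "real \<Rightarrow> real"
  assumes "a < b" and cont: "continuous_on {a..b} w" and "w a \<le> 0" "w b \<le> 0"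
    and w': "\<And>t. t \<in> {a<..<b} \<Longrightarrow> (w has_real_derivative w' t) (at t)"
    and w'': "\<And>t. t \<in> {a<..<b} \<Longrightarrow> (w' has_real_derivative w'' t) (at t)"
    and convex_where_pos: "\<And>t. t \<in> {a<..<b} \<Longrightarrow> 0 < w t \<Longrightarrow> 0 < w'' t"
    and x: "x \<in> {a..b}"
  shows "w x \<le> 0"
proof (rule ccontr)
  assume "\<not> w x \<le> 0"
  obtain c where c: "c \<in> {a..b}" and max: "\<And>t. t \<in> {a..b} \<Longrightarrow> w t \<le> w c"
    using continuous_attains_sup[OF compact_Icc _ cont] \<open>a < b\<close> by auto
  have "0 < w c"
    using max[OF x] \<open>\<not> w x \<le> 0\<close> by linarith
  then have c_in: "c \<in> {a<..<b}"
    using c assms(3,4) by (cases "c = a \<or> c = b") auto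
  have "w' c = 0"
  proof (rule DERIV_local_max[OF w'[OF c_in]])
    show "0 < min (c - a) (b - c)" using c_in by simp
    show "\<forall>t. \<bar>c - t\<bar> < min (c - a) (b - c) \<longrightarrow> w t \<le> w c"
      by (auto intro!: max simp: abs_less_iff)
  qed
  moreover have "0 < w'' c"
    using convex_where_pos[OF c_in \<open>0 < w c\<close>] .
  ultimately obtain d where "d > 0" and w'_pos: "\<And>h. 0 < h \<Longrightarrow> h < d \<Longrightarrow> 0 < w' (c + h)"
    using DERIV_pos_inc_right[OF w''[OF c_in]] by auto
  obtain h where h: "0 < h" "h < d" "h < b - c"
    using field_lbound_gt_zero[of d "b - c"] \<open>d > 0\<close> c_in by auto
  have "w c < w (c + h)"
  proof (rule DERIV_pos_imp_increasing_open[of c "c + h" w])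
    fix t assume "c < t" "t < c + h"
    then show "\<exists>l. (w has_real_derivative l) (at t) \<and> 0 < l"
      using w' w'_pos[of "t - c"] c_in h by (intro exI[of _ "w' t"]) auto
  next
    show "continuous_on {c..c + h} w"
      using c_in h by (intro continuous_on_subset[OF cont]) auto
  qed (use h in simp)
  then show False
    using max[of "c + h"] c_in h by auto
qed

lemma deriv_nonpos_at_right_zero:
  fixes w :: "real \<Rightarrow> real"
  assumes "p < q" "(w has_real_derivative D) (at q)" "w q = 0" "\<And>t. t \<in> {p..q} \<Longrightarrow> 0 \<le> w t"
  shows "D \<le> 0"
proof (rule ccontr)
  assume "\<not> D \<le> 0"
  then obtain d where "d > 0" and dec: "\<And>h. 0 < h \<Longrightarrow> h < d \<Longrightarrow> w (q - h) < w q"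
    using DERIV_pos_inc_left[OF assms(2)] by force
  obtain h where "0 < h" "h < d" "h < q - p"
    using field_lbound_gt_zero[of d "q - p"] \<open>d > 0\<close> assms(1) by auto
  then show False
    using dec[of h] assms(3) assms(4)[of "q - h"] by auto
qed

lemma deriv_nonneg_at_left_zero:
  fixes w :: "real \<Rightarrow> real"
  assumes "p < q" "(w has_real_derivative D) (at p)" "w p = 0" "\<And>t. t \<in> {p..q} \<Longrightarrow> 0 \<le> w t"
  shows "0 \<le> D"
proof (rule ccontr)
  assume "\<not> 0 \<le> D"
  then obtain d where "d > 0" and dec: "\<And>h. 0 < h \<Longrightarrow> h < d \<Longrightarrow> w (p + h) < w p"
    using DERIV_neg_dec_right[OF assms(2)] by force
  obtain h where "0 < h" "h < d" "h < q - p"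
    using field_lbound_gt_zero[of d "q - p"] \<open>d > 0\<close> assms(1) by auto
  then show False
    using dec[of h] assms(3) assms(4)[of "p + h"] by auto
qed

text \<open>The solution of \<open>eps\<^sup>2 u'' - gam u = c\<close> on \<open>[p, q]\<close> with \<open>u p = yp\<close>, \<open>u q = yq\<close>,
  where \<open>bt = sqrt gam / eps\<close>.\<close>

definition cell_solution :: "real \<Rightarrow> real \<Rightarrow> real \<Rightarrow> real \<Rightarrow> real \<Rightarrow> real \<Rightarrow> real \<Rightarrow> real \<Rightarrow> real" where
  "cell_solution gam bt p q yp yq c x =
     ((yq + c / gam) * sinh (bt * (x - p)) + (yp + c / gam) * sinh (bt * (q - x))) / sinh (bt * (q - p))
     - c / gam"

definition cell_solution_deriv :: "real \<Rightarrow> real \<Rightarrow> real \<Rightarrow> real \<Rightarrow> real \<Rightarrow> real \<Rightarrow> real \<Rightarrow> real \<Rightarrow> real" where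
  "cell_solution_deriv gam bt p q yp yq c x =
     bt * ((yq + c / gam) * cosh (bt * (x - p)) - (yp + c / gam) * cosh (bt * (q - x))) / sinh (bt * (q - p))"

lemma cell_solution_has_derivative:
  "(cell_solution gam bt p q yp yq c has_real_derivative cell_solution_deriv gam bt p q yp yq c x) (at x)"
proof -
  have "((\<lambda>x. A * sinh (bt * (x - p)) + B * sinh (bt * (q - x))) has_real_derivative
      bt * (A * cosh (bt * (x - p)) - B * cosh (bt * (q - x)))) (at x)" for A B
    by (auto intro!: derivative_eq_intros simp: algebra_simps)
  from DERIV_diff[OF DERIV_cdivide[OF this] DERIV_const] show ?thesis
    unfolding cell_solution_def[abs_def] cell_solution_deriv_def by simp
qed

lemma cell_solution_deriv_has_derivative:
  "(cell_solution_deriv gam bt p q yp yq c has_real_derivative bt\<^sup>2 * (cell_solution gam bt p q yp yq c x + c / gam)) (at x)"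
proof -
  have "((\<lambda>x. bt * (A * cosh (bt * (x - p)) - B * cosh (bt * (q - x)))) has_real_derivative
      bt\<^sup>2 * (A * sinh (bt * (x - p)) + B * sinh (bt * (q - x)))) (at x)" for A B
    by (auto intro!: derivative_eq_intros simp: algebra_simps power2_eq_square)
  from DERIV_cdivide[OF this] show ?thesis
    unfolding cell_solution_def cell_solution_deriv_def[abs_def] by simp
qed

lemma continuous_on_cell_solution: "continuous_on S (cell_solution gam bt p q yp yq c)"
  using DERIV_isCont[OF cell_solution_has_derivative] by (intro continuous_at_imp_continuous_on) blast

lemma cell_solution_uminus:
  "cell_solution gam bt p q (- yp) (- yq) (- c) x = - cell_solution gam bt p q yp yq c x"
  unfolding cell_solution_def by (simp add: add_divide_distrib diff_divide_distrib algebra_simps)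

context
  fixes gam bt p q :: real
  assumes nondegenerate: "bt * (q - p) \<noteq> 0"
begin

lemma cell_solution_left [simp]: "cell_solution gam bt p q yp yq c p = yp"
  and cell_solution_right [simp]: "cell_solution gam bt p q yp yq c q = yq"
  using nondegenerate unfolding cell_solution_def by (simp_all add: field_simps)

lemma cell_solution_deriv_left:
  "cell_solution_deriv gam bt p q yp yq c p
     = bt / sinh (bt * (q - p)) * (yq + c / gam) - bt / tanh (bt * (q - p)) * (yp + c / gam)"
  and cell_solution_deriv_right:
  "cell_solution_deriv gam bt p q yp yq c q
     = bt / tanh (bt * (q - p)) * (yq + c / gam) - bt / sinh (bt * (q - p)) * (yp + c / gam)"
  using nondegenerate cosh_real_pos[of "bt * (q - p)"]
  unfolding cell_solution_deriv_def tanh_def by (simp_all add: field_simps)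

end

lemma cell_solution_le:
  fixes y y' y'' :: "real \<Rightarrow> real"
  assumes "0 < eps" "0 < gam" "p < q"
    and cont: "continuous_on {p..q} y"
    and y': "\<And>t. t \<in> {p<..<q} \<Longrightarrow> (y has_real_derivative y' t) (at t)"
    and y'': "\<And>t. t \<in> {p<..<q} \<Longrightarrow> (y' has_real_derivative y'' t) (at t)"
    and source: "\<And>t. t \<in> {p<..<q} \<Longrightarrow> eps\<^sup>2 * y'' t - gam * y t \<le> c"
    and x: "x \<in> {p..q}"
  shows "cell_solution gam (sqrt gam / eps) p q (y p) (y q) c x \<le> y x"
proof -
  define bt where "bt = sqrt gam / eps"
  have bt: "eps\<^sup>2 * bt\<^sup>2 = gam" "bt * (q - p) \<noteq> 0"
    using assms(1-3) unfolding bt_def by (auto simp: power_divide)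
  let ?U = "cell_solution gam bt p q (y p) (y q) c"
  have "?U x - y x \<le> 0"
  proof (rule max_principle[where w = "\<lambda>t. ?U t - y t"
        and w' = "\<lambda>t. cell_solution_deriv gam bt p q (y p) (y q) c t - y' t"
        and w'' = "\<lambda>t. bt\<^sup>2 * (?U t + c / gam) - y'' t"])
    show "continuous_on {p..q} (\<lambda>t. ?U t - y t)"
      by (intro continuous_intros cont continuous_on_cell_solution)
    fix t assume t: "t \<in> {p<..<q}"
    show "((\<lambda>t. ?U t - y t) has_real_derivative cell_solution_deriv gam bt p q (y p) (y q) c t - y' t) (at t)"
      by (intro derivative_intros cell_solution_has_derivative y' t)
    show "((\<lambda>t. cell_solution_deriv gam bt p q (y p) (y q) c t - y' t) has_real_derivative
        bt\<^sup>2 * (?U t + c / gam) - y'' t) (at t)"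
      by (intro derivative_intros cell_solution_deriv_has_derivative y'' t)
    assume "0 < ?U t - y t"
    then have "0 < gam * (?U t - y t)"
      using assms(2) by simp
    moreover have "eps\<^sup>2 * (bt\<^sup>2 * (?U t + c / gam) - y'' t) = gam * ?U t + c - eps\<^sup>2 * y'' t"
      using bt assms(2) by (simp add: algebra_simps flip: mult.assoc)
    ultimately have "0 < eps\<^sup>2 * (bt\<^sup>2 * (?U t + c / gam) - y'' t)"
      using source[OF t] by (simp add: algebra_simps)
    then show "0 < bt\<^sup>2 * (?U t + c / gam) - y'' t"
      by (simp add: zero_less_mult_iff)
  qed (use assms(3) bt x in auto)
  then show ?thesis
    unfolding bt_def by simp
qed

lemma cell_solution_squeeze:
  fixes y y' y'' :: "real \<Rightarrow> real"
  assumes "0 < eps" "0 < gam" "p < q"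
    and cont: "continuous_on {p..q} y"
    and y': "\<And>t. t \<in> {p<..<q} \<Longrightarrow> (y has_real_derivative y' t) (at t)"
    and y'': "\<And>t. t \<in> {p<..<q} \<Longrightarrow> (y' has_real_derivative y'' t) (at t)"
    and residual: "\<And>t. t \<in> {p<..<q} \<Longrightarrow> \<bar>eps\<^sup>2 * y'' t - gam * y t - G\<bar> \<le> \<sigma>"
    and x: "x \<in> {p..q}"
  shows "cell_solution gam (sqrt gam / eps) p q (y p) (y q) (G + \<sigma>) x \<le> y x"
    and "y x \<le> cell_solution gam (sqrt gam / eps) p q (y p) (y q) (G - \<sigma>) x"
proof -
  have residual_bounds: "eps\<^sup>2 * y'' t - gam * y t \<le> G + \<sigma>" "G - \<sigma> \<le> eps\<^sup>2 * y'' t - gam * y t"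
    if "t \<in> {p<..<q}" for t
    using residual[OF that] by (auto simp: abs_le_iff)
  show "cell_solution gam (sqrt gam / eps) p q (y p) (y q) (G + \<sigma>) x \<le> y x"
    by (rule cell_solution_le[OF assms(1-3) cont y' y'' residual_bounds(1) x])
  have "cell_solution gam (sqrt gam / eps) p q (- y p) (- y q) (- (G - \<sigma>)) x \<le> - y x"
  proof (rule cell_solution_le[OF assms(1-3)])
    show "continuous_on {p..q} (\<lambda>t. - y t)"
      by (intro continuous_intros cont)
    fix t assume t: "t \<in> {p<..<q}"
    show "((\<lambda>t. - y t) has_real_derivative - y' t) (at t)" "((\<lambda>t. - y' t) has_real_derivative - y'' t) (at t)"
      by (intro DERIV_minus y' y'' t)+
    show "eps\<^sup>2 * - y'' t - gam * - y t \<le> - (G - \<sigma>)"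
      using residual_bounds(2)[OF t] by simp
  qed (use x in auto)
  then show "y x \<le> cell_solution gam (sqrt gam / eps) p q (y p) (y q) (G - \<sigma>) x"
    unfolding cell_solution_uminus by simp
qed

lemma cell_flux_bounds:
  fixes y y' y'' :: "real \<Rightarrow> real"
  assumes "0 < eps" "0 < gam" "p < q"
    and cont: "continuous_on {p..q} y"
    and y': "\<And>t. t \<in> {p<..<q} \<Longrightarrow> (y has_real_derivative y' t) (at t)"
    and y'': "\<And>t. t \<in> {p<..<q} \<Longrightarrow> (y' has_real_derivative y'' t) (at t)"
    and residual: "\<And>t. t \<in> {p<..<q} \<Longrightarrow> \<bar>eps\<^sup>2 * y'' t - gam * y t - G\<bar> \<le> \<sigma>"
  defines "bt \<equiv> sqrt gam / eps"
  defines "d \<equiv> bt / tanh (bt * (q - p))" and "a \<equiv> bt / sinh (bt * (q - p))"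
  shows flux_at_right: "(y has_real_derivative Dq) (at q) \<Longrightarrow>
      \<bar>Dq - (d * y q - a * y p + (d - a) * G / gam)\<bar> \<le> (d - a) * \<sigma> / gam"
    and flux_at_left: "(y has_real_derivative Dp) (at p) \<Longrightarrow>
      \<bar>Dp - (a * y q - d * y p - (d - a) * G / gam)\<bar> \<le> (d - a) * \<sigma> / gam"
proof -
  have nz: "bt * (q - p) \<noteq> 0"
    using assms(1-3) unfolding bt_def by simp
  let ?U = "cell_solution gam bt p q (y p) (y q)"
  let ?U' = "cell_solution_deriv gam bt p q (y p) (y q)"
  note squeeze = cell_solution_squeeze[OF assms(1-3) cont y' y'' residual, folded bt_def]
  have flux: "?U' c q = d * y q - a * y p + (d - a) * c / gam" "?U' c p = a * y q - d * y p - (d - a) * c / gam" for c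
    unfolding cell_solution_deriv_right[OF nz] cell_solution_deriv_left[OF nz] d_def a_def
    by (simp_all add: algebra_simps add_divide_distrib diff_divide_distrib)
  have w: "((\<lambda>t. y t - ?U c t) has_real_derivative D - ?U' c r) (at r)"
    "((\<lambda>t. ?U c t - y t) has_real_derivative ?U' c r - D) (at r)"
    if "(y has_real_derivative D) (at r)" for D r c
    using that by (auto intro!: derivative_intros cell_solution_has_derivative)
  show "\<bar>Dq - (d * y q - a * y p + (d - a) * G / gam)\<bar> \<le> (d - a) * \<sigma> / gam"
    if D: "(y has_real_derivative Dq) (at q)"
  proof -
    have "Dq - ?U' (G + \<sigma>) q \<le> 0"
      using squeeze(1) nz by (intro deriv_nonpos_at_right_zero[OF assms(3) w(1)[OF D]]) auto
    moreover have "?U' (G - \<sigma>) q - Dq \<le> 0"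
      using squeeze(2) nz by (intro deriv_nonpos_at_right_zero[OF assms(3) w(2)[OF D]]) auto
    ultimately show ?thesis
      unfolding flux by (simp add: abs_le_iff add_divide_distrib diff_divide_distrib algebra_simps)
  qed
  show "\<bar>Dp - (a * y q - d * y p - (d - a) * G / gam)\<bar> \<le> (d - a) * \<sigma> / gam"
    if D: "(y has_real_derivative Dp) (at p)"
  proof -
    have "0 \<le> Dp - ?U' (G + \<sigma>) p"
      using squeeze(1) nz by (intro deriv_nonneg_at_left_zero[OF assms(3) w(1)[OF D]]) auto
    moreover have "0 \<le> ?U' (G - \<sigma>) p - Dp"
      using squeeze(2) nz by (intro deriv_nonneg_at_left_zero[OF assms(3) w(2)[OF D]]) auto
    ultimately show ?thesis
      unfolding flux by (simp add: abs_le_iff add_divide_distrib diff_divide_distrib algebra_simps)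
  qed
qed

lemma divide_sinh_less_divide_tanh:
  fixes z c :: real
  assumes "0 < z" "0 < c"
  shows "c / sinh z < c / tanh z"
proof -
  have "c < c * cosh z"
    using assms cosh_real_nonneg_less_iff[of 0 z] by simp
  then show ?thesis
    using assms by (simp add: tanh_def divide_strict_right_mono)
qed

definition frozen_source :: "real \<Rightarrow> (real \<times> real \<Rightarrow> real) \<Rightarrow> (real \<Rightarrow> real) \<Rightarrow> real \<Rightarrow> real \<Rightarrow> real" where
  "frozen_source gam f y p q = f ((p + q) / 2, (y p + y q) / 2) - gam * ((y p + y q) / 2)"

lemma flux_jump_bracket_eq:
  fixes gam :: real
  assumes "gam \<noteq> 0"
  shows "(a1 + d1) / 2 * z0 - ((a1 + d1) / 2 + (a2 + d2) / 2) * z1 + (a2 + d2) / 2 * z2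
      - (d1 - a1) / gam * g1 - (d2 - a2) / gam * g2
    = (a2 * z2 - d2 * z1 - (d2 - a2) * (g2 - gam * ((z1 + z2) / 2)) / gam)
      - (d1 * z1 - a1 * z0 + (d1 - a1) * (g1 - gam * ((z0 + z1) / 2)) / gam)"
  using assms by (simp add: field_simps)

lemma abs_scaled_flux_jump_le:
  fixes gam :: real
  assumes "0 < gam" "0 < \<Delta>1" "0 < \<Delta>2"
    and "\<bar>D - X1\<bar> \<le> \<Delta>1 * \<sigma> / gam" "\<bar>D - X2\<bar> \<le> \<Delta>2 * \<sigma> / gam"
  shows "\<bar>gam / (\<Delta>1 + \<Delta>2) * (X2 - X1)\<bar> \<le> \<sigma>"
proof -
  have "\<bar>X2 - X1\<bar> \<le> (\<Delta>1 + \<Delta>2) * \<sigma> / gam"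
    using assms(4,5) by (simp add: abs_le_iff add_divide_distrib distrib_right)
  then have "gam / (\<Delta>1 + \<Delta>2) * \<bar>X2 - X1\<bar> \<le> gam / (\<Delta>1 + \<Delta>2) * ((\<Delta>1 + \<Delta>2) * \<sigma> / gam)"
    using assms(1-3) by (intro mult_left_mono) auto
  then show ?thesis
    using assms(1-3) by (simp add: abs_mult)
qed

lemma scheme_F_abs_le_cell_residual:
  fixes x :: "nat \<Rightarrow> real" and y y' y'' :: "real \<Rightarrow> real"
  assumes "0 < eps" "0 < gam" "0 < i" "i < N"
    and mesh: "x (i - 1) < x i" "x i < x (Suc i)"
    and cont: "continuous_on {x (i - 1)..x (Suc i)} y"
    and y': "\<And>t. t \<in> {x (i - 1)<..<x (Suc i)} \<Longrightarrow> (y has_real_derivative y' t) (at t)"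
    and y'': "\<And>t. t \<in> {x (i - 1)<..<x (Suc i)} \<Longrightarrow> (y' has_real_derivative y'' t) (at t)"
    and left: "\<And>t. t \<in> {x (i - 1)<..<x i} \<Longrightarrow>
      \<bar>eps\<^sup>2 * y'' t - gam * y t - frozen_source gam f y (x (i - 1)) (x i)\<bar> \<le> \<sigma>"
    and right: "\<And>t. t \<in> {x i<..<x (Suc i)} \<Longrightarrow>
      \<bar>eps\<^sup>2 * y'' t - gam * y t - frozen_source gam f y (x i) (x (Suc i))\<bar> \<le> \<sigma>"
  shows "\<bar>scheme_F gam eps f N x (\<lambda>j. y (x j)) i\<bar> \<le> \<sigma>"
proof -
  define bt where "bt = sqrt gam / eps"
  define p0 p1 p2 where "p0 = x (i - 1)" and "p1 = x i" and "p2 = x (Suc i)"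
  define d1 a1 d2 a2 where "d1 = bt / tanh (bt * (p1 - p0))" and "a1 = bt / sinh (bt * (p1 - p0))"
    and "d2 = bt / tanh (bt * (p2 - p1))" and "a2 = bt / sinh (bt * (p2 - p1))"
  define G1 G2 where "G1 = frozen_source gam f y p0 p1" and "G2 = frozen_source gam f y p1 p2"
  note cells = mesh[folded p0_def p1_def p2_def]
  have y'_p1: "(y has_real_derivative y' p1) (at p1)"
    using y' cells unfolding p0_def p1_def p2_def by simp
  have left_flux: "\<bar>y' p1 - (d1 * y p1 - a1 * y p0 + (d1 - a1) * G1 / gam)\<bar> \<le> (d1 - a1) * \<sigma> / gam"
    unfolding d1_def a1_def bt_def
  proof (rule cell_flux_bounds(1)[where y' = y' and y'' = y'', OF assms(1,2) cells(1) _ _ _ _ y'_p1])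
    show "continuous_on {p0..p1} y"
      using cont cells unfolding p0_def p2_def by (auto elim: continuous_on_subset)
  qed (use y' y'' left cells in \<open>auto simp: p0_def p1_def p2_def G1_def\<close>)
  have right_flux: "\<bar>y' p1 - (a2 * y p2 - d2 * y p1 - (d2 - a2) * G2 / gam)\<bar> \<le> (d2 - a2) * \<sigma> / gam"
    unfolding d2_def a2_def bt_def
  proof (rule cell_flux_bounds(2)[where y' = y' and y'' = y'', OF assms(1,2) cells(2) _ _ _ _ y'_p1])
    show "continuous_on {p1..p2} y"
      using cont cells unfolding p0_def p2_def by (auto elim: continuous_on_subset)
  qed (use y' y'' right cells in \<open>auto simp: p0_def p1_def p2_def G2_def\<close>)
  have gam_nz: "gam \<noteq> 0" and "0 < bt"
    using assms(1,2) unfolding bt_def by simp_all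
  then have pos: "0 < d1 - a1" "0 < d2 - a2"
    using divide_sinh_less_divide_tanh[of "bt * (p1 - p0)" bt] divide_sinh_less_divide_tanh[of "bt * (p2 - p1)" bt]
      cells unfolding d1_def a1_def d2_def a2_def by simp_all
  have "scheme_F gam eps f N x (\<lambda>j. y (x j)) i = gam / ((d1 - a1) + (d2 - a2)) *
      ((a1 + d1) / 2 * y p0 - ((a1 + d1) / 2 + (a2 + d2) / 2) * y p1 + (a2 + d2) / 2 * y p2
       - (d1 - a1) / gam * f ((p0 + p1) / 2, (y p0 + y p1) / 2)
       - (d2 - a2) / gam * f ((p1 + p2) / 2, (y p1 + y p2) / 2))"
    unfolding scheme_F_def Let_def using assms(3,4)
    by (simp add: p0_def p1_def p2_def d1_def a1_def d2_def a2_def bt_def)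
  also have "\<dots> = gam / ((d1 - a1) + (d2 - a2)) *
      ((a2 * y p2 - d2 * y p1 - (d2 - a2) * G2 / gam) - (d1 * y p1 - a1 * y p0 + (d1 - a1) * G1 / gam))"
    unfolding G1_def G2_def frozen_source_def flux_jump_bracket_eq[OF gam_nz] ..
  finally show ?thesis
    using abs_scaled_flux_jump_le[OF assms(2) pos left_flux right_flux] by simp
qed

lemma shishkin_node_around_transition:
  fixes eps m :: real
  assumes "0 < N" "4 dvd N"
  defines "lam \<equiv> shishkin_lambda eps m N"
  shows "shishkin_node eps m N (N div 4 - 1) = lam - 4 * lam / real N"
    and "shishkin_node eps m N (N div 4) = lam"
    and "shishkin_node eps m N (Suc (N div 4)) = lam + 2 * (1 - 2 * lam) / real N"
proof -
  obtain n where n: "N = 4 * n" "1 \<le> n"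
    using assms(1,2) by (auto simp: dvd_def)
  then show "shishkin_node eps m N (N div 4 - 1) = lam - 4 * lam / real N"
    "shishkin_node eps m N (N div 4) = lam"
    "shishkin_node eps m N (Suc (N div 4)) = lam + 2 * (1 - 2 * lam) / real N"
    unfolding shishkin_node_def Let_def lam_def by (simp_all add: field_simps)
qed

lemma exp_shishkin_decay:
  assumes "0 < N" "4 dvd N"
  shows "exp (- (2 * ln (real N) * (1 - 4 / real N))) \<le> 4 / real N"
proof (cases "N = 4")
  case False
  then have "8 \<le> real N"
    using assms by (auto simp: dvd_def)
  then have "ln (real N) \<le> 2 * ln (real N) * (1 - 4 / real N)"
    using mult_left_mono[of 1 "2 * (1 - 4 / real N)" "ln (real N)"] by (simp add: field_simps)
  then have "exp (- (2 * ln (real N) * (1 - 4 / real N))) \<le> exp (- ln (real N))"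
    by simp
  also have "\<dots> \<le> 4 / real N"
    using assms by (simp add: exp_minus inverse_eq_divide divide_right_mono)
  finally show ?thesis .
qed simp

lemma shishkin_transition_cells:
  fixes eps m :: real
  assumes "0 < eps" "0 < m" "0 < N" "4 dvd N"
    and lam_eq: "shishkin_lambda eps m N = 2 * eps * ln (real N) / sqrt m"
  defines "x \<equiv> shishkin_node eps m N" and "n \<equiv> N div 4"
  shows "0 \<le> x (n - 1)" "x (n - 1) < x n" "x n < x (Suc n)" "x (Suc n) \<le> 1 - x (n - 1)"
    and "x n - x (n - 1) \<le> 1 / real N" "x (Suc n) - x n \<le> 2 / real N"
    and "exp (- (sqrt m / eps) * x (n - 1)) \<le> 4 / real N"
proof -
  define lam where "lam = shishkin_lambda eps m N"
  have N: "4 \<le> real N"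
    using assms(3,4) by (auto dest: dvd_imp_le)
  have "0 < lam"
    using assms(1,2) N unfolding lam_def lam_eq by simp
  have "lam \<le> 1 / 4"
    unfolding lam_def shishkin_lambda_def by simp
  note nodes = shishkin_node_around_transition[OF assms(3,4), of eps m, folded lam_def x_def n_def]
  have "4 * lam / real N \<le> lam" "4 * lam / real N \<le> 1 / real N" "0 < 4 * lam / real N"
    using N \<open>0 < lam\<close> \<open>lam \<le> 1 / 4\<close> by (simp_all add: field_simps)
  moreover have "0 < 2 * (1 - 2 * lam) / real N" "2 * (1 - 2 * lam) / real N \<le> 2 / real N"
    "2 * (1 - 2 * lam) / real N \<le> 1 / 2"
    using N \<open>0 < lam\<close> \<open>lam \<le> 1 / 4\<close> by (simp_all add: field_simps)
  ultimately show "0 \<le> x (n - 1)" "x (n - 1) < x n" "x n < x (Suc n)" "x (Suc n) \<le> 1 - x (n - 1)"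
    "x n - x (n - 1) \<le> 1 / real N" "x (Suc n) - x n \<le> 2 / real N"
    unfolding nodes using \<open>lam \<le> 1 / 4\<close> by linarith+
  have "sqrt m / eps * x (n - 1) = 2 * ln (real N) * (1 - 4 / real N)"
    unfolding nodes lam_def lam_eq using assms(1,2) by (simp add: field_simps)
  then show "exp (- (sqrt m / eps) * x (n - 1)) \<le> 4 / real N"
    using exp_shishkin_decay[OF assms(3,4)] by simp
qed

definition layer_barrier :: "real \<Rightarrow> real \<Rightarrow> real \<Rightarrow> real" where
  "layer_barrier c b t = exp (- c * t) + exp (- c * (b - t))"

definition layer_barrier_deriv :: "real \<Rightarrow> real \<Rightarrow> real \<Rightarrow> real" where
  "layer_barrier_deriv c b t = c * (exp (- c * (b - t)) - exp (- c * t))"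

lemma layer_barrier_has_derivative: "(layer_barrier c b has_real_derivative layer_barrier_deriv c b t) (at t)"
  unfolding layer_barrier_def[abs_def] layer_barrier_deriv_def
  by (auto intro!: derivative_eq_intros simp: algebra_simps)

lemma layer_barrier_deriv_has_derivative:
  "(layer_barrier_deriv c b has_real_derivative c\<^sup>2 * layer_barrier c b t) (at t)"
  unfolding layer_barrier_def layer_barrier_deriv_def[abs_def]
  by (auto intro!: derivative_eq_intros simp: algebra_simps power2_eq_square)

lemma layer_barrier_pos: "0 < layer_barrier c b t"
  unfolding layer_barrier_def by (simp add: add_pos_pos)

lemma layer_barrier_ends: "1 \<le> layer_barrier c b 0" "1 \<le> layer_barrier c b b"
  unfolding layer_barrier_def by simp_all

locale semilinear_bvp =
  fixes eps m :: real and f :: "real \<times> real \<Rightarrow> real" and y y' y'' :: "real \<Rightarrow> real"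
  assumes eps_pos: "0 < eps" and m_pos: "0 < m"
    and continuous: "continuous_on {0..1} y" and left_bc: "y 0 = 0" and right_bc: "y 1 = 0"
    and deriv1: "\<And>t. t \<in> {0<..<1} \<Longrightarrow> (y has_real_derivative y' t) (at t)"
    and deriv2: "\<And>t. t \<in> {0<..<1} \<Longrightarrow> (y' has_real_derivative y'' t) (at t)"
    and ode: "\<And>t. t \<in> {0<..<1} \<Longrightarrow> eps\<^sup>2 * y'' t = f (t, y t)"
    and strongly_monotone: "\<And>t u v. t \<in> {0..1} \<Longrightarrow> u \<le> v \<Longrightarrow> m * (v - u) \<le> f (t, v) - f (t, u)"

lemma bvp_solution_semilinear_bvp:
  assumes "bvp_solution eps f y" "0 < eps" "0 < m"
    and "\<And>t u v. t \<in> {0..1} \<Longrightarrow> u \<le> v \<Longrightarrow> m * (v - u) \<le> f (t, v) - f (t, u)"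
  obtains y' y'' where "semilinear_bvp eps m f y y' y''"
  using assms unfolding bvp_solution_def semilinear_bvp_def by blast

context semilinear_bvp
begin

text \<open>The problem class is invariant under \<open>y \<mapsto> - y\<close> and \<open>x \<mapsto> 1 - x\<close>; this turns the one-sided
  estimates below into two-sided ones.\<close>

lemma negated: "semilinear_bvp eps m (\<lambda>(t, u). - f (t, - u)) (\<lambda>t. - y t) (\<lambda>t. - y' t) (\<lambda>t. - y'' t)"
proof
  show "continuous_on {0..1} (\<lambda>t. - y t)"
    by (intro continuous_intros continuous)
  show "m * (v - u) \<le> (case (t, v) of (t, u) \<Rightarrow> - f (t, - u)) - (case (t, u) of (t, u) \<Rightarrow> - f (t, - u))"
    if "t \<in> {0..1}" "u \<le> v" for t u v
    using strongly_monotone[of t "- v" "- u"] that by simp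
qed (auto intro!: DERIV_minus deriv1 deriv2 simp: left_bc right_bc ode eps_pos m_pos)

lemma reflected: "semilinear_bvp eps m (\<lambda>(t, u). f (1 - t, u)) (\<lambda>t. y (1 - t)) (\<lambda>t. - y' (1 - t)) (\<lambda>t. y'' (1 - t))"
proof
  show "continuous_on {0..1} (\<lambda>t. y (1 - t))"
    by (rule continuous_on_compose2[OF continuous]) (auto intro!: continuous_intros)
  fix t :: real assume t: "t \<in> {0<..<1}"
  have flip: "((\<lambda>t. 1 - t) has_real_derivative - 1) (at t)"
    by (auto intro!: derivative_eq_intros)
  show "((\<lambda>t. y (1 - t)) has_real_derivative - y' (1 - t)) (at t)"
    using DERIV_chain2[OF deriv1[of "1 - t"] flip] t by simp
  show "((\<lambda>t. - y' (1 - t)) has_real_derivative y'' (1 - t)) (at t)"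
    using DERIV_minus[OF DERIV_chain2[OF deriv2[of "1 - t"] flip]] t by simp
qed (auto simp: left_bc right_bc ode eps_pos m_pos strongly_monotone)

lemma le_source_bound:
  assumes A: "\<And>t. t \<in> {0..1} \<Longrightarrow> \<bar>f (t, 0)\<bar> \<le> A" and x: "x \<in> {0..1}"
  shows "y x \<le> A / m"
proof -
  have "0 \<le> A / m"
    using A[of 0] m_pos by simp
  have "y x - A / m \<le> 0"
  proof (rule max_principle[where w = "\<lambda>t. y t - A / m" and w' = y' and w'' = y''])
    show "continuous_on {0..1} (\<lambda>t. y t - A / m)"
      by (intro continuous_intros continuous)
    fix t :: real assume t: "t \<in> {0<..<1}"
    show "((\<lambda>t. y t - A / m) has_real_derivative y' t) (at t)"
      using deriv1[OF t] by (auto intro!: derivative_eq_intros)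
    assume "0 < y t - A / m"
    then have large: "A < m * y t"
      using m_pos by (simp add: field_simps)
    have "0 \<le> A"
      using \<open>0 \<le> A / m\<close> m_pos by (simp add: zero_le_divide_iff)
    then have "0 \<le> y t"
      using large m_pos by (meson le_less_trans less_imp_le zero_less_mult_pos)
    then have "m * y t \<le> f (t, y t) - f (t, 0)"
      using strongly_monotone[of t 0 "y t"] t by auto
    then have "0 < eps\<^sup>2 * y'' t"
      using large ode[OF t] A[of t] t by (auto simp: abs_le_iff)
    then show "0 < y'' t"
      by (simp add: zero_less_mult_iff)
  qed (use left_bc right_bc \<open>0 \<le> A / m\<close> deriv2 x in auto)
  then show ?thesis by simp
qed

lemma abs_le_source_bound:
  assumes "\<And>t. t \<in> {0..1} \<Longrightarrow> \<bar>f (t, 0)\<bar> \<le> A" and "x \<in> {0..1}"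
  shows "\<bar>y x\<bar> \<le> A / m"
proof -
  interpret neg: semilinear_bvp eps m "\<lambda>(t, u). - f (t, - u)" "\<lambda>t. - y t" "\<lambda>t. - y' t" "\<lambda>t. - y'' t"
    by (rule negated)
  show ?thesis
    using le_source_bound[OF assms] neg.le_source_bound[of A x] assms by (auto simp: abs_le_iff)
qed

lemma shifted_ode_lower_bound:
  assumes lip: "\<And>s t u. s \<in> {0..1} \<Longrightarrow> t \<in> {0..1} \<Longrightarrow> \<bar>u\<bar> \<le> M \<Longrightarrow> \<bar>f (s, u) - f (t, u)\<bar> \<le> L * \<bar>s - t\<bar>"
    and bound: "\<And>t. t \<in> {0..1} \<Longrightarrow> \<bar>y t\<bar> \<le> M"
    and t: "t \<in> {0<..<1}" "t + \<delta> \<in> {0<..<1}" and "0 \<le> \<delta>" "y t \<le> y (t + \<delta>)"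
  shows "m * (y (t + \<delta>) - y t) - L * \<delta> \<le> eps\<^sup>2 * (y'' (t + \<delta>) - y'' t)"
proof -
  have "- L * \<delta> \<le> f (t + \<delta>, y (t + \<delta>)) - f (t, y (t + \<delta>))"
    using lip[of "t + \<delta>" t "y (t + \<delta>)"] bound[of "t + \<delta>"] t \<open>0 \<le> \<delta>\<close> by (auto simp: abs_le_iff)
  moreover have "m * (y (t + \<delta>) - y t) \<le> f (t, y (t + \<delta>)) - f (t, y t)"
    using strongly_monotone[of t "y t" "y (t + \<delta>)"] t \<open>y t \<le> y (t + \<delta>)\<close> by auto
  ultimately show ?thesis
    using ode[OF t(1)] ode[OF t(2)] by (simp add: algebra_simps)
qed

lemma increment_le:
  assumes lip: "\<And>s t u. s \<in> {0..1} \<Longrightarrow> t \<in> {0..1} \<Longrightarrow> \<bar>u\<bar> \<le> M \<Longrightarrow> \<bar>f (s, u) - f (t, u)\<bar> \<le> L * \<bar>s - t\<bar>"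
    and bound: "\<And>t. t \<in> {0..1} \<Longrightarrow> \<bar>y t\<bar> \<le> M" and "0 \<le> L"
    and \<delta>: "0 < \<delta>" "\<delta> < 1" and x: "x \<in> {0..1 - \<delta>}"
  shows "y (x + \<delta>) - y x \<le> L * \<delta> / m + M * layer_barrier (sqrt m / eps) (1 - \<delta>) x"
proof -
  define c b where "c = sqrt m / eps" and "b = 1 - \<delta>"
  define \<Phi> where "\<Phi> t = L * \<delta> / m + M * layer_barrier c b t" for t
  have "0 \<le> M"
    using bound[of 0] by auto
  have "0 \<le> L * \<delta> / m"
    using \<open>0 \<le> L\<close> m_pos \<delta> by simp
  then have \<Phi>_nonneg: "0 \<le> \<Phi> t" for t
    unfolding \<Phi>_def using \<open>0 \<le> M\<close> layer_barrier_pos[of c b t] by simp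
  have \<Phi>_ends: "M \<le> \<Phi> 0" "M \<le> \<Phi> b"
    unfolding \<Phi>_def using \<open>0 \<le> L * \<delta> / m\<close> mult_left_mono[OF layer_barrier_ends(1)[of c b] \<open>0 \<le> M\<close>]
      mult_left_mono[OF layer_barrier_ends(2)[of c b] \<open>0 \<le> M\<close>] by (simp_all add: add_increasing)
  have \<Phi>_ode: "eps\<^sup>2 * (M * (c\<^sup>2 * layer_barrier c b t)) = m * \<Phi> t - L * \<delta>" for t
    using eps_pos m_pos unfolding \<Phi>_def c_def by (simp add: power_divide field_simps)
  have in01: "t \<in> {0<..<1}" "t + \<delta> \<in> {0<..<1}" if "t \<in> {0<..<b}" for t
    using that \<delta> unfolding b_def by auto
  have "y (x + \<delta>) - y x - \<Phi> x \<le> 0"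
  proof (rule max_principle[where w = "\<lambda>t. y (t + \<delta>) - y t - \<Phi> t"
        and w' = "\<lambda>t. y' (t + \<delta>) - y' t - M * layer_barrier_deriv c b t"
        and w'' = "\<lambda>t. y'' (t + \<delta>) - y'' t - M * (c\<^sup>2 * layer_barrier c b t)"])
    show "0 < b" using \<delta> unfolding b_def by simp
    show "continuous_on {0..b} (\<lambda>t. y (t + \<delta>) - y t - \<Phi> t)"
      unfolding \<Phi>_def layer_barrier_def using \<delta>
      by (intro continuous_intros continuous_on_compose2[OF continuous] continuous_on_subset[OF continuous])
        (auto simp: b_def)
    show "y (0 + \<delta>) - y 0 - \<Phi> 0 \<le> 0" "y (b + \<delta>) - y b - \<Phi> b \<le> 0"
      using bound[of \<delta>] bound[of b] \<Phi>_ends \<delta> left_bc right_bc by (auto simp: b_def)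
    fix t :: real assume t: "t \<in> {0<..<b}"
    have shifted: "((\<lambda>t. y (t + \<delta>)) has_real_derivative y' (t + \<delta>)) (at t)"
      "((\<lambda>t. y' (t + \<delta>)) has_real_derivative y'' (t + \<delta>)) (at t)"
      using deriv1[OF in01(2)[OF t]] deriv2[OF in01(2)[OF t]] by (simp_all add: DERIV_shift)
    show "((\<lambda>t. y (t + \<delta>) - y t - \<Phi> t) has_real_derivative
        y' (t + \<delta>) - y' t - M * layer_barrier_deriv c b t) (at t)"
      unfolding \<Phi>_def using in01[OF t]
      by (auto intro!: derivative_eq_intros shifted deriv1 layer_barrier_has_derivative)
    show "((\<lambda>t. y' (t + \<delta>) - y' t - M * layer_barrier_deriv c b t) has_real_derivative
        y'' (t + \<delta>) - y'' t - M * (c\<^sup>2 * layer_barrier c b t)) (at t)"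
      using in01[OF t] by (auto intro!: derivative_eq_intros shifted deriv2 layer_barrier_deriv_has_derivative)
    assume pos: "0 < y (t + \<delta>) - y t - \<Phi> t"
    then have "m * (y (t + \<delta>) - y t) - L * \<delta> \<le> eps\<^sup>2 * (y'' (t + \<delta>) - y'' t)"
      using shifted_ode_lower_bound[OF lip bound in01[OF t]] \<Phi>_nonneg[of t] \<delta> by simp
    then have "m * (y (t + \<delta>) - y t - \<Phi> t) \<le> eps\<^sup>2 * (y'' (t + \<delta>) - y'' t - M * (c\<^sup>2 * layer_barrier c b t))"
      using \<Phi>_ode[of t] by (simp add: algebra_simps)
    moreover have "0 < m * (y (t + \<delta>) - y t - \<Phi> t)"
      using pos m_pos by simp
    ultimately show "0 < y'' (t + \<delta>) - y'' t - M * (c\<^sup>2 * layer_barrier c b t)"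
      by (smt (verit) zero_less_mult_iff zero_le_power2)
  qed (use x in \<open>auto simp: b_def\<close>)
  then show ?thesis
    unfolding \<Phi>_def b_def c_def by simp
qed

lemma abs_increment_le:
  assumes lip: "\<And>s t u. s \<in> {0..1} \<Longrightarrow> t \<in> {0..1} \<Longrightarrow> \<bar>u\<bar> \<le> M \<Longrightarrow> \<bar>f (s, u) - f (t, u)\<bar> \<le> L * \<bar>s - t\<bar>"
    and bound: "\<And>t. t \<in> {0..1} \<Longrightarrow> \<bar>y t\<bar> \<le> M" and "0 \<le> L"
    and st: "0 \<le> s" "s \<le> t" "t \<le> 1"
  shows "\<bar>y t - y s\<bar> \<le> L * (t - s) / m + M * (exp (- (sqrt m / eps) * s) + exp (- (sqrt m / eps) * (1 - t)))"
proof -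
  have "0 \<le> M"
    using bound[of 0] by auto
  consider "s = t" | "s = 0 \<and> t = 1" | "0 < t - s \<and> t - s < 1"
    using st by fastforce
  then show ?thesis
  proof cases
    case 1
    then show ?thesis using \<open>0 \<le> M\<close> by simp
  next
    case 2
    then show ?thesis using \<open>0 \<le> M\<close> \<open>0 \<le> L\<close> m_pos left_bc right_bc by simp
  next
    case 3
    interpret refl: semilinear_bvp eps m "\<lambda>(t, u). f (1 - t, u)" "\<lambda>t. y (1 - t)" "\<lambda>t. - y' (1 - t)" "\<lambda>t. y'' (1 - t)"
      by (rule reflected)
    have "y t - y s \<le> L * (t - s) / m + M * layer_barrier (sqrt m / eps) (1 - (t - s)) s"
      using increment_le[OF lip bound \<open>0 \<le> L\<close>, of "t - s" s] 3 st by auto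
    moreover have "y (1 - (1 - t + (t - s))) - y (1 - (1 - t))
        \<le> L * (t - s) / m + M * layer_barrier (sqrt m / eps) (1 - (t - s)) (1 - t)"
    proof (rule refl.increment_le)
      show "\<bar>(case (s', u) of (t, u) \<Rightarrow> f (1 - t, u)) - (case (t', u) of (t, u) \<Rightarrow> f (1 - t, u))\<bar> \<le> L * \<bar>s' - t'\<bar>"
        if "s' \<in> {0..1}" "t' \<in> {0..1}" "\<bar>u\<bar> \<le> M" for s' t' u
        using lip[of "1 - s'" "1 - t'" u] that by (simp add: abs_minus_commute)
    qed (use bound \<open>0 \<le> L\<close> 3 st in auto)
    ultimately show ?thesis
      by (simp add: abs_le_iff add.commute layer_barrier_def)
  qed
qed

lemma frozen_source_residual:
  assumes lip: "\<And>s t u v. s \<in> {0..1} \<Longrightarrow> t \<in> {0..1} \<Longrightarrow> \<bar>u\<bar> \<le> M \<Longrightarrow> \<bar>v\<bar> \<le> M \<Longrightarrow>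
      \<bar>f (s, u) - f (t, v)\<bar> \<le> L * (\<bar>s - t\<bar> + \<bar>u - v\<bar>)"
    and bound: "\<And>t. t \<in> {0..1} \<Longrightarrow> \<bar>y t\<bar> \<le> M"
    and "0 \<le> L" "0 \<le> gam"
    and cell: "0 \<le> p" "q \<le> 1" "q - p \<le> 2 * h"
    and osc: "\<And>s t. s \<in> {p..q} \<Longrightarrow> t \<in> {p..q} \<Longrightarrow> \<bar>y t - y s\<bar> \<le> D"
    and t: "t \<in> {p<..<q}"
  shows "\<bar>eps\<^sup>2 * y'' t - gam * y t - frozen_source gam f y p q\<bar> \<le> L * (h + D) + gam * D"
proof -
  let ?avg = "(y p + y q) / 2"
  have "\<bar>y t - ?avg\<bar> \<le> D"
    using osc[of p t] osc[of q t] t by (auto simp: abs_le_iff field_simps)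
  moreover have "\<bar>t - (p + q) / 2\<bar> \<le> h"
    using t cell by (auto simp: abs_le_iff field_simps)
  moreover have "\<bar>f (t, y t) - f ((p + q) / 2, ?avg)\<bar> \<le> L * (\<bar>t - (p + q) / 2\<bar> + \<bar>y t - ?avg\<bar>)"
    using lip bound[of p] bound[of q] bound[of t] t cell by auto
  ultimately have "\<bar>f (t, y t) - f ((p + q) / 2, ?avg)\<bar> \<le> L * (h + D)"
    using \<open>0 \<le> L\<close> by (smt (verit) mult_left_mono)
  moreover have "\<bar>gam * y t - gam * ?avg\<bar> = gam * \<bar>y t - ?avg\<bar>"
    using \<open>0 \<le> gam\<close> by (simp add: abs_mult right_diff_distrib[symmetric] del: times_divide_eq_right)
  then have "\<bar>gam * y t - gam * ?avg\<bar> \<le> gam * D"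
    using \<open>\<bar>y t - ?avg\<bar> \<le> D\<close> \<open>0 \<le> gam\<close> by (simp add: mult_left_mono)
  ultimately show ?thesis
    using ode[of t] t cell unfolding frozen_source_def by (auto simp: abs_le_iff)
qed

lemma oscillation_near_transition:
  assumes lip: "\<And>s t u. s \<in> {0..1} \<Longrightarrow> t \<in> {0..1} \<Longrightarrow> \<bar>u\<bar> \<le> M \<Longrightarrow> \<bar>f (s, u) - f (t, u)\<bar> \<le> L * \<bar>s - t\<bar>"
    and bound: "\<And>t. t \<in> {0..1} \<Longrightarrow> \<bar>y t\<bar> \<le> M"
    and "0 \<le> L" "0 < N" "4 dvd N"
    and lam: "shishkin_lambda eps m N = 2 * eps * ln (real N) / sqrt m"
    and st: "s \<in> {shishkin_node eps m N (N div 4 - 1)..shishkin_node eps m N (Suc (N div 4))}"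
      "t \<in> {shishkin_node eps m N (N div 4 - 1)..shishkin_node eps m N (Suc (N div 4))}"
  shows "\<bar>y t - y s\<bar> \<le> (3 * L / m + 8 * M) / real N"
proof -
  define x n where "x = shishkin_node eps m N" and "n = N div 4"
  note cells = shishkin_transition_cells[OF eps_pos m_pos assms(4-6), folded x_def n_def]
  have "0 \<le> M"
    using bound[of 0] by simp
  have ordered: "\<bar>y t - y s\<bar> \<le> (3 * L / m + 8 * M) / real N" if "x (n - 1) \<le> s" "s \<le> t" "t \<le> x (Suc n)" for s t
  proof -
    let ?c = "sqrt m / eps"
    have "?c * x (n - 1) \<le> ?c * s" "?c * x (n - 1) \<le> ?c * (1 - t)"
      by (intro mult_left_mono; use that cells(4) eps_pos m_pos in simp)+
    then have "exp (- ?c * s) \<le> exp (- ?c * x (n - 1))" "exp (- ?c * (1 - t)) \<le> exp (- ?c * x (n - 1))"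
      by simp_all
    then have "exp (- ?c * s) \<le> 4 / real N" "exp (- ?c * (1 - t)) \<le> 4 / real N"
      using cells(7) by linarith+
    then have "M * (exp (- ?c * s) + exp (- ?c * (1 - t))) \<le> M * (8 / real N)"
      using \<open>0 \<le> M\<close> by (intro mult_left_mono) auto
    moreover have "L * (t - s) / m \<le> L * (3 / real N) / m"
      using cells(5,6) that \<open>0 \<le> L\<close> m_pos by (intro divide_right_mono mult_left_mono) auto
    moreover have "L * (3 / real N) / m + M * (8 / real N) = (3 * L / m + 8 * M) / real N"
      using m_pos assms(4) by (simp add: field_simps)
    ultimately show ?thesis
      using abs_increment_le[OF lip bound \<open>0 \<le> L\<close>, of s t] that cells(1,4) by linarith
  qed
  show ?thesis
    using ordered[of s t] ordered[of t s] st unfolding x_def n_def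
    by (cases "s \<le> t") (auto simp: abs_minus_commute)
qed

lemma scheme_F_transition_bound:
  assumes lip: "\<And>s t u v. s \<in> {0..1} \<Longrightarrow> t \<in> {0..1} \<Longrightarrow> \<bar>u\<bar> \<le> M \<Longrightarrow> \<bar>v\<bar> \<le> M \<Longrightarrow>
      \<bar>f (s, u) - f (t, v)\<bar> \<le> L * (\<bar>s - t\<bar> + \<bar>u - v\<bar>)"
    and bound: "\<And>t. t \<in> {0..1} \<Longrightarrow> \<bar>y t\<bar> \<le> M"
    and "0 \<le> L" "0 < gam" "0 < N" "4 dvd N"
    and lam: "shishkin_lambda eps m N = 2 * eps * ln (real N) / sqrt m"
  shows "\<bar>scheme_F gam eps f N (shishkin_node eps m N) (\<lambda>i. y (shishkin_node eps m N i)) (N div 4)\<bar>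
    \<le> (L + (L + gam) * (3 * L / m + 8 * M)) / real N"
proof -
  define x n where "x = shishkin_node eps m N" and "n = N div 4"
  define D where "D = (3 * L / m + 8 * M) / real N"
  note cells = shishkin_transition_cells[OF eps_pos m_pos assms(5-7), folded x_def n_def]
  have lip_x: "\<bar>f (s, u) - f (t, u)\<bar> \<le> L * \<bar>s - t\<bar>" if "s \<in> {0..1}" "t \<in> {0..1}" "\<bar>u\<bar> \<le> M" for s t u
    using lip[OF that that(3)] by simp
  have osc: "\<bar>y t - y s\<bar> \<le> D" if "s \<in> {x (n - 1)..x (Suc n)}" "t \<in> {x (n - 1)..x (Suc n)}" for s t
    using oscillation_near_transition[OF lip_x bound \<open>0 \<le> L\<close> assms(5-7)] that
    unfolding D_def x_def n_def by simp
  have residual: "\<bar>eps\<^sup>2 * y'' t - gam * y t - frozen_source gam f y p q\<bar> \<le> (L + (L + gam) * (3 * L / m + 8 * M)) / real N"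
    if "x (n - 1) \<le> p" "q \<le> x (Suc n)" "q - p \<le> 2 / real N" "t \<in> {p<..<q}" for p q t
  proof -
    have "\<bar>eps\<^sup>2 * y'' t - gam * y t - frozen_source gam f y p q\<bar> \<le> L * (1 / real N + D) + gam * D"
      using that cells(1,4) osc assms(4)
      by (intro frozen_source_residual[OF lip bound \<open>0 \<le> L\<close>]) auto
    also have "\<dots> = (L + (L + gam) * (3 * L / m + 8 * M)) / real N"
      unfolding D_def using m_pos assms(5) by (simp add: field_simps)
    finally show ?thesis .
  qed
  have "0 < n" "n < N"
    using assms(5,6) unfolding n_def by (auto dest: dvd_imp_le)
  then show ?thesis
    unfolding x_def[symmetric] n_def[symmetric]
  proof (rule scheme_F_abs_le_cell_residual[OF eps_pos assms(4) _ _ cells(2,3)])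
    show "continuous_on {x (n - 1)..x (Suc n)} y"
      using cells(1,4) by (intro continuous_on_subset[OF continuous]) auto
    show "\<bar>eps\<^sup>2 * y'' t - gam * y t - frozen_source gam f y (x (n - 1)) (x n)\<bar>
        \<le> (L + (L + gam) * (3 * L / m + 8 * M)) / real N" if "t \<in> {x (n - 1)<..<x n}" for t
      using cells(3,5) that by (intro residual) auto
    show "\<bar>eps\<^sup>2 * y'' t - gam * y t - frozen_source gam f y (x n) (x (Suc n))\<bar>
        \<le> (L + (L + gam) * (3 * L / m + 8 * M)) / real N" if "t \<in> {x n<..<x (Suc n)}" for t
      using cells(2,6) that by (intro residual) auto
  qed (use cells(1,4) in \<open>auto intro!: deriv1 deriv2\<close>)
qed

end

theorem lemma2:
  fixes f fx fy fxx fxy fyx fyy :: "real \<times> real \<Rightarrow> real"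
    and m gam C0 :: real
  assumes "C2_with_partials f fx fy fxx fxy fyx fyy strip"
    and "m > 0"
    and "\<forall>z\<in>strip. fy z \<ge> m"
    and "\<forall>z\<in>strip. gam \<ge> fy z"
    and "C0 > 0"
  shows "\<exists>C>0. \<forall>eps (N::nat) y.
           eps > 0 \<and> N > 0 \<and> 4 dvd N \<and>
           shishkin_lambda eps m N = 2 * eps * ln (real N) / sqrt m \<and>
           eps \<le> C0 / real N \<and> bvp_solution eps f y \<longrightarrow>
           \<bar>scheme_F gam eps f N (shishkin_node eps m N) (\<lambda>i. y (shishkin_node eps m N i)) (N div 4)\<bar>
             \<le> C / real N"
proof -
  have "(0, 0) \<in> strip"
    by (simp add: strip_def)
  then have "0 < gam"
    using assms(2-4) by force
  note monotone = C2_with_partials_strongly_monotone[OF assms(1,3)]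
  obtain A where A: "\<And>t. t \<in> {0..1} \<Longrightarrow> \<bar>f (t, 0)\<bar> \<le> A"
    using C2_with_partials_bounded_on_axis[OF assms(1)] by blast
  define M where "M = A / m"
  obtain L where "0 < L" and lip: "\<And>s t u v. s \<in> {0..1} \<Longrightarrow> t \<in> {0..1} \<Longrightarrow> \<bar>u\<bar> \<le> M \<Longrightarrow> \<bar>v\<bar> \<le> M \<Longrightarrow>
      \<bar>f (s, u) - f (t, v)\<bar> \<le> L * (\<bar>s - t\<bar> + \<bar>u - v\<bar>)"
    using C2_with_partials_lipschitz_on_rectangle[OF assms(1)] by blast
  have "0 \<le> M"
    using A[of 0] assms(2) unfolding M_def by simp
  show ?thesis
  proof (intro exI[of _ "L + (L + gam) * (3 * L / m + 8 * M)"] conjI allI impI)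
    show "0 < L + (L + gam) * (3 * L / m + 8 * M)"
      using \<open>0 < L\<close> \<open>0 < gam\<close> \<open>0 \<le> M\<close> assms(2) by (simp add: add_pos_nonneg)
    fix eps N y
    assume "eps > 0 \<and> N > 0 \<and> 4 dvd N \<and> shishkin_lambda eps m N = 2 * eps * ln (real N) / sqrt m \<and>
      eps \<le> C0 / real N \<and> bvp_solution eps f y"
    then have "0 < eps" "0 < N" "4 dvd N" and lam: "shishkin_lambda eps m N = 2 * eps * ln (real N) / sqrt m"
      and "bvp_solution eps f y"
      by auto
    then obtain y' y'' where "semilinear_bvp eps m f y y' y''"
      using bvp_solution_semilinear_bvp monotone assms(2) by blast
    then interpret semilinear_bvp eps m f y y' y'' .
    show "\<bar>scheme_F gam eps f N (shishkin_node eps m N) (\<lambda>i. y (shishkin_node eps m N i)) (N div 4)\<bar>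
        \<le> (L + (L + gam) * (3 * L / m + 8 * M)) / real N"
      using scheme_F_transition_bound[OF lip abs_le_source_bound[OF A, folded M_def] _ \<open>0 < gam\<close>
          \<open>0 < N\<close> \<open>4 dvd N\<close> lam] \<open>0 < L\<close>
      by simp
  qed
qed

end
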